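(* Let $T\subseteq 2^{<\omega}$ be a tree of positive measure $p$ and let $q<1$ be a positive rational. Then there exist a tree $S\subseteq 2^{<\omega}$ of measure at least $q$ and a Turing functional $\Phi$ such that $\Phi(A)$ is an infinite path through $T$ for every infinite path $A$ through $S$.
   Context: The measure of a tree $T\subseteq 2^{<\omega}$ is the Lebesgue (uniform, fair-coin) measure of the set of its infinite paths in $2^\omega$. *)

theory Defs
  imports "HOL-Probability.Probability" "HOL-Library.Sublist" "HOL-Library.Nat_Bijection"
begin

definition init_seg :: "(nat \<Rightarrow> bool) \<Rightarrow> nat \<Rightarrow> bool list" where
  "init_seg A n = map A [0..<n]"

definition prefix_of :: "bool list \<Rightarrow> (nat \<Rightarrow> bool) \<Rightarrow> bool" where
  "prefix_of \<sigma> A \<longleftrightarrow> \<sigma> = init_seg A (length \<sigma>)"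

definition is_tree :: "bool list set \<Rightarrow> bool" where
  "is_tree T \<longleftrightarrow> (\<forall>\<sigma> \<tau>. \<sigma> \<in> T \<and> prefix \<tau> \<sigma> \<longrightarrow> \<tau> \<in> T)"

definition paths :: "bool list set \<Rightarrow> (nat \<Rightarrow> bool) set" where
  "paths T = {A. \<forall>n. init_seg A n \<in> T}"

definition coin_space :: "(nat \<Rightarrow> bool) measure" where
  "coin_space = PiM (UNIV :: nat set) (\<lambda>_. measure_pmf (bernoulli_pmf (1/2)))"

definition tree_measure :: "bool list set \<Rightarrow> real" where
  "tree_measure T = measure coin_space (paths T)"

datatype recf = Z | Sc | Proj nat | Comp recf "recf list" | Prim recf recf | Mn recf

inductive eval :: "recf \<Rightarrow> nat list \<Rightarrow> nat \<Rightarrow> bool" where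
  eval_Z: "eval Z xs 0"
| eval_Sc: "eval Sc (x # xs) (Suc x)"
| eval_Proj: "i < length xs \<Longrightarrow> eval (Proj i) xs (xs ! i)"
| eval_Comp: "list_all2 (\<lambda>f y. eval f xs y) fs ys \<Longrightarrow> eval g ys z \<Longrightarrow> eval (Comp g fs) xs z"
| eval_Prim0: "eval f xs y \<Longrightarrow> eval (Prim f g) (0 # xs) y"
| eval_PrimS: "eval (Prim f g) (n # xs) y \<Longrightarrow> eval g (y # n # xs) z \<Longrightarrow> eval (Prim f g) (Suc n # xs) z"
| eval_Mn: "eval f (n # xs) 0 \<Longrightarrow> (\<forall>m<n. \<exists>k. eval f (m # xs) (Suc k)) \<Longrightarrow> eval (Mn f) xs n"

definition ce :: "nat set \<Rightarrow> bool" where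
  "ce W \<longleftrightarrow> (\<exists>f. \<forall>x. x \<in> W \<longleftrightarrow> (\<exists>y. eval f [x] y))"

definition code_str :: "bool list \<Rightarrow> nat" where
  "code_str \<sigma> = list_encode (map of_bool \<sigma>)"

definition code_pair :: "bool list \<times> bool list \<Rightarrow> nat" where
  "code_pair p = prod_encode (code_str (fst p), code_str (snd p))"

definition compatible :: "bool list \<Rightarrow> bool list \<Rightarrow> bool" where
  "compatible \<sigma> \<tau> \<longleftrightarrow> prefix \<sigma> \<tau> \<or> prefix \<tau> \<sigma>"

text \<open>A Turing functional is a c.e. set of axioms (sigma, tau) ("on oracle extending sigma,
output extends tau") such that compatible oracle strings yield compatible outputs.\<close>
definition turing_functional :: "(bool list \<times> bool list) set \<Rightarrow> bool" where
  "turing_functional \<Phi> \<longleftrightarrow> ce (code_pair ` \<Phi>) \<and>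
     (\<forall>\<sigma> \<tau> \<sigma>' \<tau>'. (\<sigma>, \<tau>) \<in> \<Phi> \<and> (\<sigma>', \<tau>') \<in> \<Phi> \<and> compatible \<sigma> \<sigma>' \<longrightarrow> compatible \<tau> \<tau>')"

definition functional_output :: "(bool list \<times> bool list) set \<Rightarrow> (nat \<Rightarrow> bool) \<Rightarrow> (nat \<Rightarrow> bool) \<Rightarrow> bool" where
  "functional_output \<Phi> A X \<longleftrightarrow>
     (\<forall>\<sigma> \<tau>. (\<sigma>, \<tau>) \<in> \<Phi> \<and> prefix_of \<sigma> A \<longrightarrow> prefix_of \<tau> X) \<and>
     (\<forall>n. \<exists>\<sigma> \<tau>. (\<sigma>, \<tau>) \<in> \<Phi> \<and> prefix_of \<sigma> A \<and> n \<le> length \<tau>)"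

end

theory Submission
  imports Defs
begin

text \<open>If T has measure p > 0, the proportion \<open>card (level T n) / 2 ^ n\<close> of strings of length n
  in T tends to p, while the measures of the subtrees \<open>T\<^sub>\<sigma> = {\<rho>. \<sigma> @ \<rho> \<in> T}\<close> above these
  strings add up to \<open>2 ^ n * p\<close>. At a level where the proportion is below p / q, some \<open>T\<^sub>\<sigma>\<close>
  must therefore have measure at least q. Take \<open>S = T\<^sub>\<sigma>\<close> and let \<Phi> have the axioms
  \<open>(\<tau>, \<sigma> @ \<tau>)\<close>: it sends every path A of S to the path \<open>\<sigma> A\<close> of T. That \<Phi> is a Turing
  functional comes down to enumerating its axioms by a primitive recursive function.\<close>

section \<open>Measure of a tree and of its subtrees\<close>

definition cylinder :: "bool list \<Rightarrow> (nat \<Rightarrow> bool) set" where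
  "cylinder \<tau> = {A. prefix_of \<tau> A}"

definition level :: "bool list set \<Rightarrow> nat \<Rightarrow> bool list set" where
  "level T n = {\<tau> \<in> T. length \<tau> = n}"

definition subtree :: "bool list set \<Rightarrow> bool list \<Rightarrow> bool list set" where
  "subtree T \<sigma> = {\<rho>. \<sigma> @ \<rho> \<in> T}"

lemma length_init_seg [simp]: "length (init_seg A n) = n"
  by (simp add: init_seg_def)

lemma prefix_init_seg:
  assumes "m \<le> n" shows "prefix (init_seg A m) (init_seg A n)"
proof -
  have "[0..<n] = [0..<m] @ [m..<n]"
    using assms upt_add_eq_append[of 0 m "n - m"] by simp
  then show ?thesis by (simp add: init_seg_def)
qed

lemma prefix_of_iff_nth: "prefix_of \<tau> A \<longleftrightarrow> (\<forall>i<length \<tau>. A i = \<tau> ! i)"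
  unfolding prefix_of_def init_seg_def list_eq_iff_nth_eq by auto

lemma prob_space_coin_space: "prob_space coin_space"
  unfolding coin_space_def by (intro prob_space_PiM) (simp add: prob_space_measure_pmf)

lemma cylinder_eq_prod_emb:
  "cylinder \<tau> = prod_emb UNIV (\<lambda>_. measure_pmf (bernoulli_pmf (1/2))) {..<length \<tau>}
                  (\<Pi>\<^sub>E i\<in>{..<length \<tau>}. {\<tau> ! i})" (is "_ = ?E")
proof (intro equalityI subsetI)
  fix A assume "A \<in> cylinder \<tau>"
  then show "A \<in> ?E"
    unfolding cylinder_def prefix_of_iff_nth prod_emb_def by (simp add: space_PiM PiE_iff)
next
  fix A assume "A \<in> ?E"
  then have "restrict A {..<length \<tau>} \<in> (\<Pi>\<^sub>E i\<in>{..<length \<tau>}. {\<tau> ! i})"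
    unfolding prod_emb_def by blast
  then have "A i = \<tau> ! i" if "i < length \<tau>" for i
    using PiE_mem that by fastforce
  then show "A \<in> cylinder \<tau>"
    unfolding cylinder_def prefix_of_iff_nth by blast
qed

lemma sets_cylinder: "cylinder \<tau> \<in> sets coin_space"
  unfolding cylinder_eq_prod_emb coin_space_def by (rule sets_PiM_I) simp_all

lemma measure_cylinder: "measure coin_space (cylinder \<tau>) = (1/2) ^ length \<tau>"
proof -
  have "emeasure coin_space (cylinder \<tau>) =
        (\<Prod>i<length \<tau>. emeasure (measure_pmf (bernoulli_pmf (1/2))) {\<tau> ! i})"
    unfolding cylinder_eq_prod_emb coin_space_def
    by (intro emeasure_PiM_emb) (auto simp: prob_space_measure_pmf)
  also have "\<dots> = (\<Prod>i<length \<tau>. ennreal (1/2))"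
    by (intro prod.cong) (simp_all add: emeasure_pmf_single)
  also have "\<dots> = ennreal ((1/2) ^ length \<tau>)"
    by (simp only: prod_constant card_lessThan ennreal_power)
  finally show ?thesis
    by (simp add: measure_eq_emeasure_eq_ennreal)
qed

lemma finite_level: "finite (level T n)"
  by (rule finite_subset[OF _ finite_lists_length_eq[of "UNIV :: bool set" n]])
     (auto simp: level_def)

lemma init_seg_in_eq_UN_level: "{A. init_seg A n \<in> T} = (\<Union>\<tau>\<in>level T n. cylinder \<tau>)"
  unfolding level_def cylinder_def prefix_of_def by auto

lemma sets_init_seg_in: "{A. init_seg A n \<in> T} \<in> sets coin_space"
  unfolding init_seg_in_eq_UN_level by (intro sets.finite_UN finite_level sets_cylinder)

lemma measure_init_seg_in:
  "measure coin_space {A. init_seg A n \<in> T} = card (level T n) / 2 ^ n"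
proof -
  interpret prob_space coin_space by (rule prob_space_coin_space)
  have "disjoint_family_on cylinder (level T n)"
    by (auto simp: disjoint_family_on_def level_def cylinder_def prefix_of_def)
  then have "measure coin_space {A. init_seg A n \<in> T} = (\<Sum>\<tau>\<in>level T n. measure coin_space (cylinder \<tau>))"
    unfolding init_seg_in_eq_UN_level by (intro measure_finite_Union finite_level) (auto simp: sets_cylinder)
  also have "\<dots> = card (level T n) / 2 ^ n"
    by (simp add: measure_cylinder level_def power_one_over)
  finally show ?thesis .
qed

lemma tree_measure_LIMSEQ:
  assumes "is_tree T"
  shows "(\<lambda>n. card (level T n) / 2 ^ n) \<longlonglongrightarrow> tree_measure T"
proof -
  interpret prob_space coin_space by (rule prob_space_coin_space)
  have "decseq (\<lambda>n. {A. init_seg A n \<in> T})"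
    using assms prefix_init_seg unfolding is_tree_def decseq_def by blast
  then have "(\<lambda>n. measure coin_space {A. init_seg A n \<in> T})
               \<longlonglongrightarrow> measure coin_space (\<Inter>n. {A. init_seg A n \<in> T})"
    by (intro finite_Lim_measure_decseq) (auto simp: sets_init_seg_in)
  moreover have "paths T = (\<Inter>n. {A. init_seg A n \<in> T})"
    unfolding paths_def by auto
  ultimately show ?thesis
    unfolding tree_measure_def measure_init_seg_in by simp
qed

lemma is_tree_subtree: "is_tree T \<Longrightarrow> is_tree (subtree T \<sigma>)"
  unfolding is_tree_def subtree_def by (metis mem_Collect_eq prefix_append)

lemma card_level_subtree:
  "card (level (subtree T \<sigma>) m) = card {\<tau> \<in> level T (length \<sigma> + m). prefix \<sigma> \<tau>}"
proof -
  have "(\<lambda>\<rho>. \<sigma> @ \<rho>) ` level (subtree T \<sigma>) m = {\<tau> \<in> level T (length \<sigma> + m). prefix \<sigma> \<tau>}"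
    by (auto simp: level_def subtree_def prefix_def)
  then show ?thesis
    by (metis (no_types, lifting) card_image inj_onI same_append_eq)
qed

lemma card_level_add:
  assumes "is_tree T"
  shows "card (level T (n + m)) = (\<Sum>\<sigma>\<in>level T n. card (level (subtree T \<sigma>) m))"
proof -
  have "level T (n + m) = (\<Union>\<sigma>\<in>level T n. {\<tau> \<in> level T (n + m). prefix \<sigma> \<tau>})"
  proof (intro equalityI subsetI)
    fix \<tau> assume "\<tau> \<in> level T (n + m)"
    moreover from this have "take n \<tau> \<in> level T n"
      using assms take_is_prefix unfolding level_def is_tree_def by fastforce
    ultimately show "\<tau> \<in> (\<Union>\<sigma>\<in>level T n. {\<tau> \<in> level T (n + m). prefix \<sigma> \<tau>})"
      using take_is_prefix by blast
  qed auto
  also have "card \<dots> = (\<Sum>\<sigma>\<in>level T n. card {\<tau> \<in> level T (n + m). prefix \<sigma> \<tau>})"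
    by (intro card_UN_disjoint finite_level ballI finite_subset[OF _ finite_level[of T "n + m"]])
       (auto simp: level_def prefix_def)
  also have "\<dots> = (\<Sum>\<sigma>\<in>level T n. card (level (subtree T \<sigma>) m))"
  proof (intro sum.cong refl)
    fix \<sigma> assume "\<sigma> \<in> level T n"
    then have "length \<sigma> = n" by (simp add: level_def)
    then show "card {\<tau> \<in> level T (n + m). prefix \<sigma> \<tau>} = card (level (subtree T \<sigma>) m)"
      by (simp only: card_level_subtree)
  qed
  finally show ?thesis .
qed

lemma sum_tree_measure_subtree:
  assumes "is_tree T"
  shows "(\<Sum>\<sigma>\<in>level T n. tree_measure (subtree T \<sigma>)) = 2 ^ n * tree_measure T"
proof -
  have "(\<lambda>m. \<Sum>\<sigma>\<in>level T n. card (level (subtree T \<sigma>) m) / 2 ^ m)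
          \<longlonglongrightarrow> (\<Sum>\<sigma>\<in>level T n. tree_measure (subtree T \<sigma>))"
    by (intro tendsto_sum tree_measure_LIMSEQ is_tree_subtree assms)
  moreover have "(\<Sum>\<sigma>\<in>level T n. card (level (subtree T \<sigma>) m) / 2 ^ m)
                   = 2 ^ n * (card (level T (m + n)) / 2 ^ (m + n))" for m
  proof -
    have "real (card (level T (m + n))) = (\<Sum>\<sigma>\<in>level T n. real (card (level (subtree T \<sigma>) m)))"
      using card_level_add[OF assms, of n m] by (simp add: add.commute)
    then show ?thesis by (simp add: sum_divide_distrib[symmetric] power_add)
  qed
  moreover have "(\<lambda>m. 2 ^ n * (card (level T (m + n)) / 2 ^ (m + n))) \<longlonglongrightarrow> 2 ^ n * tree_measure T"
    by (intro tendsto_mult_left LIMSEQ_ignore_initial_segment tree_measure_LIMSEQ assms)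
  ultimately show ?thesis
    using LIMSEQ_unique by simp
qed

text \<open>Otherwise \<open>2 ^ n * p \<le> q * card (level T n)\<close> at every level n, contradicting
  \<open>card (level T n) / 2 ^ n \<longlonglongrightarrow> p < p / q\<close>.\<close>
lemma exists_subtree_measure_ge:
  assumes tree: "is_tree T" and pos: "0 < tree_measure T" and q: "0 < q" "q < 1"
  shows "\<exists>\<sigma>. q \<le> tree_measure (subtree T \<sigma>)"
proof (rule ccontr)
  assume small: "\<nexists>\<sigma>. q \<le> tree_measure (subtree T \<sigma>)"
  have "tree_measure T < tree_measure T / q"
    using pos q by (simp add: less_divide_eq)
  with tree_measure_LIMSEQ[OF tree]
  have "eventually (\<lambda>n. card (level T n) / 2 ^ n < tree_measure T / q) sequentially"
    by (rule order_tendstoD(2))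
  then obtain n where n: "card (level T n) / 2 ^ n < tree_measure T / q"
    by (auto simp: eventually_sequentially)
  have "2 ^ n * tree_measure T = (\<Sum>\<sigma>\<in>level T n. tree_measure (subtree T \<sigma>))"
    by (rule sum_tree_measure_subtree[OF tree, symmetric])
  also have "\<dots> \<le> (\<Sum>\<sigma>\<in>level T n. q)"
    using small by (intro sum_mono) (simp add: not_le less_imp_le)
  also have "\<dots> < 2 ^ n * tree_measure T"
    using n q(1) by (simp add: field_simps)
  finally show False by simp
qed

section \<open>Primitive recursive building blocks\<close>

inductive_cases eval_ZE: "eval Z xs y"
inductive_cases eval_ScE: "eval Sc xs y"
inductive_cases eval_ProjE: "eval (Proj i) xs y"
inductive_cases eval_CompE: "eval (Comp g fs) xs y"
inductive_cases eval_PrimE: "eval (Prim f g) xs y"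
inductive_cases eval_MnE: "eval (Mn f) xs y"

lemma eval_deterministic: "eval f xs y \<Longrightarrow> eval f xs y' \<Longrightarrow> y = y'"
proof (induction f xs y arbitrary: y' rule: eval.induct)
  case (eval_Comp xs fs ys g z)
  from eval_Comp.prems obtain ys' where ys': "list_all2 (\<lambda>f y. eval f xs y) fs ys'" "eval g ys' y'"
    by (auto elim: eval_CompE)
  from eval_Comp.IH(1) ys'(1) have "ys = ys'"
    by (auto simp: list_all2_conv_all_nth intro!: nth_equalityI)
  with eval_Comp.IH(2) ys'(2) show ?case by blast
next
  case (eval_Mn f n xs)
  from eval_Mn.prems have y': "eval f (y' # xs) 0" "\<forall>m<y'. \<exists>k. eval f (m # xs) (Suc k)"
    by (auto elim: eval_MnE)
  show ?case
  proof (rule linorder_cases)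
    assume "n < y'"
    with y'(2) eval_Mn.IH(1) show ?thesis by fastforce
  next
    assume "y' < n"
    with y'(1) eval_Mn.IH(2) show ?thesis by fastforce
  qed
next
  case (eval_Prim0 f xs y g)
  from eval_Prim0.prems have "eval f xs y'" by (auto elim: eval_PrimE)
  with eval_Prim0.IH show ?case by blast
next
  case (eval_PrimS f g n xs y z)
  from eval_PrimS.prems obtain y1 where "eval (Prim f g) (n # xs) y1" "eval g (y1 # n # xs) y'"
    by (auto elim: eval_PrimE)
  with eval_PrimS.IH show ?case by blast
qed (auto elim: eval_ZE eval_ScE eval_ProjE)

text \<open>Evaluation rules are stated as \<open>y = F xs \<Longrightarrow> eval f xs y\<close>, so that they compose by
  resolution and leave the arithmetic identities as side goals.\<close>

lemma eval_ZI: "y = 0 \<Longrightarrow> eval Z xs y"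
  using eval_Z by simp

lemma eval_ScI: "y = Suc x \<Longrightarrow> eval Sc (x # xs) y"
  using eval_Sc by simp

lemma eval_ProjI: "i < length xs \<Longrightarrow> y = xs ! i \<Longrightarrow> eval (Proj i) xs y"
  using eval_Proj by simp

lemma eval_Comp1I: "eval f xs a \<Longrightarrow> eval g [a] z \<Longrightarrow> eval (Comp g [f]) xs z"
  by (rule eval_Comp[where ys="[a]"]) simp_all

lemma eval_Comp2I:
  "eval f1 xs a \<Longrightarrow> eval f2 xs b \<Longrightarrow> eval g [a, b] z \<Longrightarrow> eval (Comp g [f1, f2]) xs z"
  by (rule eval_Comp[where ys="[a, b]"]) simp_all

lemma eval_Prim_iterate:
  assumes "eval f xs (R 0)" and "\<And>n. eval g (R n # n # xs) (R (Suc n))" and "y = R n"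
  shows "eval (Prim f g) (n # xs) y"
proof -
  have "eval (Prim f g) (n # xs) (R n)"
    by (induction n) (use assms in \<open>auto intro: eval_Prim0 eval_PrimS\<close>)
  with assms(3) show ?thesis by simp
qed

definition one_rf :: recf where
  "one_rf = Comp Sc [Z]"

lemma eval_one_rf: "y = 1 \<Longrightarrow> eval one_rf xs y"
  unfolding one_rf_def by (rule eval_Comp1I[OF eval_ZI eval_ScI]) simp_all

definition add_rf :: recf where
  "add_rf = Prim (Proj 0) (Comp Sc [Proj 0])"

lemma eval_add_rf: "y = a + b \<Longrightarrow> eval add_rf [a, b] y"
  unfolding add_rf_def
  by (rule eval_Prim_iterate[where R="\<lambda>n. n + b"], rule eval_ProjI, simp_all,
      rule eval_Comp1I[OF eval_ProjI eval_ScI], simp_all)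

definition pred_rf :: recf where
  "pred_rf = Prim Z (Proj 1)"

lemma eval_pred_rf: "y = n - 1 \<Longrightarrow> eval pred_rf [n] y"
  unfolding pred_rf_def
  by (rule eval_Prim_iterate[where R="\<lambda>n. n - 1"], rule eval_ZI, simp, rule eval_ProjI, simp_all)

text \<open>Primitive recursion runs on the first argument, hence the swap.\<close>
definition monus_rf :: recf where
  "monus_rf = Comp (Prim (Proj 0) (Comp pred_rf [Proj 0])) [Proj 1, Proj 0]"

lemma eval_monus_rf: "y = a - b \<Longrightarrow> eval monus_rf [a, b] y"
  unfolding monus_rf_def
  by (rule eval_Comp2I[OF eval_ProjI eval_ProjI eval_Prim_iterate[where R="\<lambda>n. a - n"]],
      simp_all, rule eval_ProjI, simp_all, rule eval_Comp1I[OF eval_ProjI eval_pred_rf], simp_all, arith)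

definition triangle_rf :: recf where
  "triangle_rf = Prim Z (Comp add_rf [Proj 0, Comp Sc [Proj 1]])"

lemma eval_triangle_rf: "y = triangle n \<Longrightarrow> eval triangle_rf [n] y"
  unfolding triangle_rf_def
  by (rule eval_Prim_iterate[where R=triangle], rule eval_ZI, simp,
      rule eval_Comp2I[OF eval_ProjI eval_Comp1I[OF eval_ProjI eval_ScI] eval_add_rf], simp_all, arith)

definition prod_encode_rf :: recf where
  "prod_encode_rf = Comp add_rf [Comp triangle_rf [add_rf], Proj 0]"

lemma eval_prod_encode_rf: "y = prod_encode (a, b) \<Longrightarrow> eval prod_encode_rf [a, b] y"
  unfolding prod_encode_rf_def
  by (rule eval_Comp2I[OF eval_Comp1I[OF eval_add_rf eval_triangle_rf] eval_ProjI eval_add_rf])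
     (simp_all add: prod_encode_def)

definition cons_rf :: recf where
  "cons_rf = Comp Sc [prod_encode_rf]"

lemma eval_cons_rf: "y = Suc (prod_encode (a, b)) \<Longrightarrow> eval cons_rf [a, b] y"
  unfolding cons_rf_def by (rule eval_Comp1I[OF eval_prod_encode_rf eval_ScI]) simp_all

definition mod2_rf :: recf where
  "mod2_rf = Prim Z (Comp monus_rf [one_rf, Proj 0])"

lemma eval_mod2_rf: "y = n mod 2 \<Longrightarrow> eval mod2_rf [n] y"
  unfolding mod2_rf_def
  by (rule eval_Prim_iterate[where R="\<lambda>n. n mod 2"], rule eval_ZI, simp,
      rule eval_Comp2I[OF eval_one_rf eval_ProjI eval_monus_rf], simp_all, presburger)

definition div2_rf :: recf where
  "div2_rf = Prim Z (Comp add_rf [Proj 0, Comp mod2_rf [Proj 1]])"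

lemma eval_div2_rf: "y = n div 2 \<Longrightarrow> eval div2_rf [n] y"
  unfolding div2_rf_def
  by (rule eval_Prim_iterate[where R="\<lambda>n. n div 2"], rule eval_ZI, simp,
      rule eval_Comp2I[OF eval_ProjI eval_Comp1I[OF eval_ProjI eval_mod2_rf] eval_add_rf],
      simp_all, presburger)

definition div_pow2_rf :: recf where
  "div_pow2_rf = Prim (Proj 0) (Comp div2_rf [Proj 0])"

lemma eval_div_pow2_rf: "y = K div 2 ^ m \<Longrightarrow> eval div_pow2_rf [m, K] y"
  unfolding div_pow2_rf_def
  by (rule eval_Prim_iterate[where R="\<lambda>m. K div 2 ^ m"], rule eval_ProjI, simp_all,
      rule eval_Comp1I[OF eval_ProjI eval_div2_rf], simp_all, metis div_mult2_eq mult.commute)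

definition cond_rf :: recf where
  "cond_rf = Prim Z (Proj 2)"

lemma eval_cond_rf: "y = (if c = 0 then 0 else a) \<Longrightarrow> eval cond_rf [c, a] y"
  unfolding cond_rf_def
  by (rule eval_Prim_iterate[where R="\<lambda>c. if c = 0 then 0 else a"], rule eval_ZI, simp,
      rule eval_ProjI, simp_all)

section \<open>Enumerating the axioms of the functional\<close>

fun bits :: "nat \<Rightarrow> bool list" where
  "bits K = (if K \<le> 1 then [] else odd K # bits (K div 2))"

declare bits.simps [simp del]

lemma bits_surj: "\<exists>k. bits (Suc k) = \<tau>"
proof (induction \<tau>)
  case Nil
  have "bits (Suc 0) = []" by (simp add: bits.simps)
  then show ?case ..
next
  case (Cons b \<tau>)
  then obtain k where "bits (Suc k) = \<tau>" by blast
  moreover have "bits (Suc (2 * k + 1 + of_bool b)) = b # bits (Suc k)"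
    by (subst bits.simps) simp
  ultimately show ?case by metis
qed

lemma code_str_Nil: "code_str [] = 0"
  by (simp add: code_str_def)

lemma code_str_Cons: "code_str (b # \<tau>) = Suc (prod_encode (of_bool b, code_str \<tau>))"
  by (simp add: code_str_def)

text \<open>Since \<open>code_str\<close> nests the last digit innermost, \<open>code_str (bits K)\<close> is computed
  by a primitive recursion that reads the digits of K from the most significant end:
  after j steps it has coded the bits of the top part \<open>K div 2 ^ (K - j)\<close>.\<close>
fun code_top_bits :: "nat \<Rightarrow> nat \<Rightarrow> nat" where
  "code_top_bits 0 K = 0"
| "code_top_bits (Suc j) K = (let h = K div 2 ^ (K - Suc j) in
     if h \<le> 1 then 0 else Suc (prod_encode (h mod 2, code_top_bits j K)))"

lemma code_top_bits_eq: "j \<le> K \<Longrightarrow> code_top_bits j K = code_str (bits (K div 2 ^ (K - j)))"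
proof (induction j)
  case 0
  have "K div 2 ^ K = 0" by (simp add: less_exp)
  then show ?case by (simp add: bits.simps code_str_Nil)
next
  case (Suc j)
  define h where "h = K div 2 ^ (K - Suc j)"
  have "K - j = Suc (K - Suc j)"
    using Suc.prems by simp
  then have "K div 2 ^ (K - j) = h div 2"
    by (simp del: power_Suc add: h_def power_Suc2 div_mult2_eq)
  with Suc have "code_top_bits j K = code_str (bits (h div 2))" by simp
  then show ?case
    by (simp add: h_def[symmetric] Let_def bits.simps[of h] code_str_Nil code_str_Cons mod_2_eq_odd)
qed

text \<open>Used in the recursion step of \<open>code_top_bits_rf\<close>, on \<open>[code_top_bits j K, j, K]\<close>;
  the first argument is ignored.\<close>
definition div_top_rf :: recf where
  "div_top_rf = Comp div_pow2_rf [Comp monus_rf [Proj 2, Comp Sc [Proj 1]], Proj 2]"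

lemma eval_div_top_rf: "y = K div 2 ^ (K - Suc j) \<Longrightarrow> eval div_top_rf [c, j, K] y"
  unfolding div_top_rf_def
  by (rule eval_Comp2I[OF eval_Comp2I[OF eval_ProjI eval_Comp1I[OF eval_ProjI eval_ScI] eval_monus_rf]
                          eval_ProjI eval_div_pow2_rf]) simp_all

definition code_top_bits_rf :: recf where
  "code_top_bits_rf = Prim Z (Comp cond_rf [Comp monus_rf [div_top_rf, one_rf],
                                          Comp cons_rf [Comp mod2_rf [div_top_rf], Proj 0]])"

lemma eval_code_top_bits_rf: "y = code_top_bits j K \<Longrightarrow> eval code_top_bits_rf [j, K] y"
  unfolding code_top_bits_rf_def
  by (rule eval_Prim_iterate[where R="\<lambda>j. code_top_bits j K"], rule eval_ZI, simp,
      rule eval_Comp2I[OF eval_Comp2I[OF eval_div_top_rf eval_one_rf eval_monus_rf]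
                          eval_Comp2I[OF eval_Comp1I[OF eval_div_top_rf eval_mod2_rf] eval_ProjI eval_cons_rf]
                          eval_cond_rf],
      simp_all add: Let_def, auto)

primrec prepend_code :: "bool list \<Rightarrow> nat \<Rightarrow> nat" where
  "prepend_code [] c = c"
| "prepend_code (b # \<sigma>) c = Suc (prod_encode (of_bool b, prepend_code \<sigma> c))"

lemma prepend_code_code_str: "prepend_code \<sigma> (code_str \<tau>) = code_str (\<sigma> @ \<tau>)"
  by (induction \<sigma>) (simp_all add: code_str_Cons)

primrec prepend_code_rf :: "bool list \<Rightarrow> recf" where
  "prepend_code_rf [] = Proj 0"
| "prepend_code_rf (b # \<sigma>) = Comp cons_rf [if b then one_rf else Z, prepend_code_rf \<sigma>]"

lemma eval_prepend_code_rf: "y = prepend_code \<sigma> c \<Longrightarrow> eval (prepend_code_rf \<sigma>) [c] y"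
proof (induction \<sigma> arbitrary: y)
  case Nil
  then show ?case by (simp add: eval_ProjI)
next
  case (Cons b \<sigma>)
  have "eval (if b then one_rf else Z) [c] (of_bool b)"
    by (simp add: eval_one_rf eval_ZI)
  from this Cons.IH[OF refl] show ?case
    unfolding prepend_code_rf.simps by (rule eval_Comp2I[OF _ _ eval_cons_rf]) (simp add: Cons.prems)
qed

definition enum_rf :: "bool list \<Rightarrow> recf" where
  "enum_rf \<sigma> = (let code_bits = Comp code_top_bits_rf [Comp Sc [Proj 0], Comp Sc [Proj 0]]
                 in Comp prod_encode_rf [code_bits, Comp (prepend_code_rf \<sigma>) [code_bits]])"

lemma eval_enum_rf: "eval (enum_rf \<sigma>) [k] (code_pair (bits (Suc k), \<sigma> @ bits (Suc k)))"
proof -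
  have code: "code_top_bits (Suc k) (Suc k) = code_str (bits (Suc k))"
    using code_top_bits_eq[of "Suc k" "Suc k"] by simp
  have code_bits: "eval (Comp code_top_bits_rf [Comp Sc [Proj 0], Comp Sc [Proj 0]]) [k] (code_str (bits (Suc k)))"
    by (rule eval_Comp2I[OF eval_Comp1I[OF eval_ProjI eval_ScI] eval_Comp1I[OF eval_ProjI eval_ScI]
                            eval_code_top_bits_rf])
       (simp_all del: code_top_bits.simps, simp only: code)
  show ?thesis
    unfolding enum_rf_def Let_def code_pair_def
    by (rule eval_Comp2I[OF code_bits eval_Comp1I[OF code_bits eval_prepend_code_rf] eval_prod_encode_rf])
       (simp_all add: prepend_code_code_str)
qed

text \<open>The range of a total recursive function is c.e.: it is the domain of the search
  \<open>x \<mapsto> \<mu>k. |G k - x| = 0\<close>.\<close>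
lemma ce_range:
  assumes G: "\<And>k. eval g [k] (G k)"
  shows "ce (range G)"
proof -
  define dist_rf where "dist_rf = Comp add_rf [Comp monus_rf [Comp g [Proj 0], Proj 1],
                                               Comp monus_rf [Proj 1, Comp g [Proj 0]]]"
  have dist: "eval dist_rf [k, x] ((G k - x) + (x - G k))" for k x
    unfolding dist_rf_def
    by (rule eval_Comp2I[OF eval_Comp2I[OF eval_Comp1I[OF eval_ProjI G] eval_ProjI eval_monus_rf]
                            eval_Comp2I[OF eval_ProjI eval_Comp1I[OF eval_ProjI G] eval_monus_rf]
                            eval_add_rf]) simp_all
  have "x \<in> range G \<longleftrightarrow> (\<exists>n. eval (Mn dist_rf) [x] n)" for x
  proof
    assume "x \<in> range G"
    then have ex: "\<exists>k. G k = x" by auto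
    define n where "n = (LEAST k. G k = x)"
    have "G n = x"
      unfolding n_def using ex by (rule LeastI_ex)
    then have "eval dist_rf [n, x] 0"
      using dist[of n x] by simp
    moreover have "\<exists>d. eval dist_rf [m, x] (Suc d)" if "m < n" for m
    proof -
      have "G m \<noteq> x"
        using not_less_Least[OF that[unfolded n_def]] .
      then have "(G m - x) + (x - G m) = Suc ((G m - x) + (x - G m) - 1)" by arith
      then show ?thesis using dist[of m x] by metis
    qed
    ultimately have "eval (Mn dist_rf) [x] n"
      by (intro eval_Mn) auto
    then show "\<exists>n. eval (Mn dist_rf) [x] n" ..
  next
    assume "\<exists>n. eval (Mn dist_rf) [x] n"
    then obtain n where "eval dist_rf [n, x] 0" by (auto elim: eval_MnE)
    with dist have "(G n - x) + (x - G n) = 0" by (blast dest: eval_deterministic)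
    then have "G n = x" by arith
    then show "x \<in> range G" by blast
  qed
  then show ?thesis unfolding ce_def by blast
qed

definition prepend_functional :: "bool list \<Rightarrow> (bool list \<times> bool list) set" where
  "prepend_functional \<sigma> = range (\<lambda>\<tau>. (\<tau>, \<sigma> @ \<tau>))"

lemma turing_functional_prepend: "turing_functional (prepend_functional \<sigma>)"
proof -
  have "code_pair ` prepend_functional \<sigma> = range (\<lambda>k. code_pair (bits (Suc k), \<sigma> @ bits (Suc k)))"
  proof (intro equalityI subsetI)
    fix x assume "x \<in> code_pair ` prepend_functional \<sigma>"
    then obtain \<tau> where x: "x = code_pair (\<tau>, \<sigma> @ \<tau>)"
      unfolding prepend_functional_def by blast
    obtain k where "bits (Suc k) = \<tau>"
      using bits_surj by blast
    with x show "x \<in> range (\<lambda>k. code_pair (bits (Suc k), \<sigma> @ bits (Suc k)))" by blast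
  qed (auto simp: prepend_functional_def)
  then have "ce (code_pair ` prepend_functional \<sigma>)"
    using ce_range[OF eval_enum_rf] by simp
  moreover have "compatible \<tau>\<^sub>1 \<tau>\<^sub>2"
    if "(\<sigma>\<^sub>1, \<tau>\<^sub>1) \<in> prepend_functional \<sigma>" "(\<sigma>\<^sub>2, \<tau>\<^sub>2) \<in> prepend_functional \<sigma>"
       "compatible \<sigma>\<^sub>1 \<sigma>\<^sub>2" for \<sigma>\<^sub>1 \<tau>\<^sub>1 \<sigma>\<^sub>2 \<tau>\<^sub>2
    using that unfolding prepend_functional_def compatible_def by auto
  ultimately show ?thesis
    unfolding turing_functional_def by blast
qed

definition prepend_seq :: "bool list \<Rightarrow> (nat \<Rightarrow> bool) \<Rightarrow> nat \<Rightarrow> bool" where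
  "prepend_seq \<sigma> A i = (if i < length \<sigma> then \<sigma> ! i else A (i - length \<sigma>))"

lemma init_seg_prepend_seq: "init_seg (prepend_seq \<sigma> A) (length \<sigma> + m) = \<sigma> @ init_seg A m"
  by (rule nth_equalityI) (auto simp: init_seg_def prepend_seq_def nth_append)

lemma prepend_seq_in_paths:
  assumes "is_tree T" and "A \<in> paths (subtree T \<sigma>)"
  shows "prepend_seq \<sigma> A \<in> paths T"
  unfolding paths_def
proof (intro CollectI allI)
  fix N
  have "init_seg (prepend_seq \<sigma> A) (length \<sigma> + (N - length \<sigma>)) \<in> T"
    using assms(2) by (simp add: init_seg_prepend_seq paths_def subtree_def)
  moreover have "prefix (init_seg (prepend_seq \<sigma> A) N) (init_seg (prepend_seq \<sigma> A) (length \<sigma> + (N - length \<sigma>)))"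
    by (rule prefix_init_seg) simp
  ultimately show "init_seg (prepend_seq \<sigma> A) N \<in> T"
    using assms(1) unfolding is_tree_def by blast
qed

lemma functional_output_prepend:
  "functional_output (prepend_functional \<sigma>) A (prepend_seq \<sigma> A)"
  unfolding functional_output_def prefix_of_def
proof (intro conjI allI impI)
  fix \<tau>\<^sub>1 \<tau>\<^sub>2
  assume "(\<tau>\<^sub>1, \<tau>\<^sub>2) \<in> prepend_functional \<sigma> \<and> \<tau>\<^sub>1 = init_seg A (length \<tau>\<^sub>1)"
  then have "\<tau>\<^sub>2 = \<sigma> @ \<tau>\<^sub>1" and "init_seg A (length \<tau>\<^sub>1) = \<tau>\<^sub>1"
    by (auto simp: prepend_functional_def)
  then show "\<tau>\<^sub>2 = init_seg (prepend_seq \<sigma> A) (length \<tau>\<^sub>2)"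
    by (simp add: init_seg_prepend_seq)
next
  fix n
  show "\<exists>\<tau>\<^sub>1 \<tau>\<^sub>2. (\<tau>\<^sub>1, \<tau>\<^sub>2) \<in> prepend_functional \<sigma> \<and> \<tau>\<^sub>1 = init_seg A (length \<tau>\<^sub>1) \<and> n \<le> length \<tau>\<^sub>2"
    by (rule exI[of _ "init_seg A n"], rule exI[of _ "\<sigma> @ init_seg A n"])
       (simp add: prepend_functional_def)
qed

theorem proposition4p4:
  fixes T :: "bool list set" and p q :: real
  assumes "is_tree T" and "tree_measure T = p" and "0 < p"
    and "q \<in> \<rat>" and "0 < q" and "q < 1"
  shows "\<exists>S \<Phi>. is_tree S \<and> q \<le> tree_measure S \<and> turing_functional \<Phi> \<and>
           (\<forall>A \<in> paths S. \<exists>X \<in> paths T. functional_output \<Phi> A X)"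
proof -
  obtain \<sigma> where "q \<le> tree_measure (subtree T \<sigma>)"
    using exists_subtree_measure_ge[OF assms(1)] assms(2,3,5,6) by auto
  moreover have "\<forall>A \<in> paths (subtree T \<sigma>). \<exists>X \<in> paths T. functional_output (prepend_functional \<sigma>) A X"
    using prepend_seq_in_paths[OF assms(1)] functional_output_prepend by blast
  ultimately show ?thesis
    using is_tree_subtree[OF assms(1)] turing_functional_prepend by blast
qed

end
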